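(* Let $l\ge 3$ and let $V_l$ be the set of Hirzebruch-Jung continued fractions $[n_1,\dots,n_l]$ of length $l$ (all $n_j\ge 2$ integers) satisfying $-1\le q_1+q_l-q\le 1$. Then: (1) no element of the form $[2,n_2,\dots,n_{l-1},2]$ lies in $V_l$; (2) if $n_1\ge 3$ and $n_l\ge 3$, then $[n_1,\dots,n_l]\notin V_l$; (3) no element of $V_l$ satisfies $\sum_{j=1}^l n_j=3l-4$.
   Context: For $[n_1,\dots,n_l]$ let $M(-n_1,\dots,-n_l)$ be the $l\times l$ tridiagonal symmetric matrix with diagonal entries $-n_1,\dots,-n_l$, entries $1$ directly above and below the diagonal, and $0$ elsewhere. Put $q=|\det M(-n_1,\dots,-n_l)|$, $q_1=|\det M(-n_2,\dots,-n_l)|$, $q_l=|\det M(-n_1,\dots,-n_{l-1})|$. *)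

theory Defs
  imports "Jordan_Normal_Form.Determinant"
begin

definition tridiag :: "int list \<Rightarrow> int mat" where
  "tridiag ns = mat (length ns) (length ns)
     (\<lambda>(i,j). if i = j then - (ns ! i) else if i = j + 1 \<or> j = i + 1 then 1 else 0)"

definition qdet :: "int list \<Rightarrow> int" where
  "qdet ns = \<bar>det (tridiag ns)\<bar>"

text \<open>q = qdet ns, q_1 = qdet (tl ns) (drop n_1), q_l = qdet (butlast ns) (drop n_l).\<close>
definition V :: "nat \<Rightarrow> int list set" where
  "V l = {ns. length ns = l \<and> (\<forall>n \<in> set ns. n \<ge> 2) \<and>
            -1 \<le> qdet (tl ns) + qdet (butlast ns) - qdet ns \<and>
            qdet (tl ns) + qdet (butlast ns) - qdet ns \<le> 1}"

end

theory Submission imports Defs begin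

text \<open>Up to sign, det M(-n_1,...,-n_l) is the continuant K(n_1,...,n_l), the top-left entry
  of the product of the matrices [[n_j,-1],[1,0]]. Write a list of length l \<ge> 3 as a # mid @ [c]
  and let [[m,p],[q,r]] be the product for mid; then the defect q_1 + q_l - q is an explicit
  bilinear expression in a, c and m, p, q, r, and the positivity bounds on these entries show that
  it is at least 2 when a = c = 2 and, after using the determinant relation m r - p q = 1, at most
  -2 when a, c \<ge> 3. Hence exactly one end of an element of V_l equals 2. An end equal to 2
  can be absorbed: [2, n_2, ..., n_l] has the same defect as [n_2, ..., n_l - 1], which shortens
  the list by one and lowers its sum by 3. Descending to length 3, where the sum is at least 6,
  every element of V_l has sum at least 3l - 3.\<close>

datatype mat2 = Mat2 int int int int

fun mat2_mult :: "mat2 \<Rightarrow> mat2 \<Rightarrow> mat2" where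
  "mat2_mult (Mat2 a b c d) (Mat2 e f g h) = Mat2 (a*e+b*g) (a*f+b*h) (c*e+d*g) (c*f+d*h)"

fun mat2_det :: "mat2 \<Rightarrow> int" where
  "mat2_det (Mat2 a b c d) = a*d - b*c"

fun mat2_11 :: "mat2 \<Rightarrow> int" where
  "mat2_11 (Mat2 a b c d) = a"

abbreviation mat2_one :: mat2 where
  "mat2_one \<equiv> Mat2 1 0 0 1"

fun hj_product :: "int list \<Rightarrow> mat2" where
  "hj_product [] = mat2_one"
| "hj_product (n # ns) = mat2_mult (Mat2 n (-1) 1 0) (hj_product ns)"

definition continuant :: "int list \<Rightarrow> int" where
  "continuant ns = mat2_11 (hj_product ns)"

definition hj_defect :: "int list \<Rightarrow> int" where
  "hj_defect ns = continuant (tl ns) + continuant (butlast ns) - continuant ns"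

lemma mat2_mult_assoc: "mat2_mult (mat2_mult x y) z = mat2_mult x (mat2_mult y z)"
  by (cases x; cases y; cases z) (simp add: algebra_simps)

lemma mat2_mult_one_left [simp]: "mat2_mult mat2_one x = x"
  by (cases x) simp

lemma mat2_det_mult: "mat2_det (mat2_mult x y) = mat2_det x * mat2_det y"
  by (cases x; cases y) (simp add: algebra_simps)

lemma hj_product_append: "hj_product (xs @ ys) = mat2_mult (hj_product xs) (hj_product ys)"
  by (induction xs) (simp_all add: mat2_mult_assoc)

lemma mat2_det_hj_product: "mat2_det (hj_product ns) = 1"
  by (induction ns) (simp_all add: mat2_det_mult)

lemma continuant_simps:
  "continuant [] = 1" "continuant [a] = a"
  "continuant (a # b # ns) = a * continuant (b # ns) - continuant ns"
  by (cases "hj_product ns"; simp add: continuant_def)+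

lemma hj_product_bounds:
  assumes "ns \<noteq> []" "\<forall>n\<in>set ns. n \<ge> 2" "hj_product ns = Mat2 m p q r"
  shows "q + r \<le> m + p \<and> 1 \<le> q + r \<and> q + 1 \<le> m \<and> p + 1 \<le> r \<and> r \<le> 0"
  using assms
proof (induction ns arbitrary: m p q r)
  case Nil
  then show ?case by simp
next
  case (Cons b ns)
  show ?case
  proof (cases "ns = []")
    case True
    then show ?thesis using Cons.prems by auto
  next
    case False
    obtain m' p' q' r' where prod: "hj_product ns = Mat2 m' p' q' r'"
      by (cases "hj_product ns")
    have IH: "q' + r' \<le> m' + p' \<and> 1 \<le> q' + r' \<and> q' + 1 \<le> m' \<and> p' + 1 \<le> r' \<and> r' \<le> 0"
      using Cons.IH[OF False _ prod] Cons.prems by auto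
    have b: "b \<ge> 2" using Cons.prems by auto
    have entries: "m = b*m' - q'" "p = b*p' - r'" "q = m'" "r = p'"
      using Cons.prems(3) prod by auto
    have "2*m' + 2*p' \<le> b*m' + b*p'"
      using mult_right_mono[of 2 b "m'+p'"] b IH by (simp add: algebra_simps)
    moreover have "2*m' \<le> b*m'" using mult_right_mono[of 2 b m'] b IH by simp
    moreover have "b*p' \<le> 2*p'" using mult_right_mono_neg[of 2 b p'] b IH by simp
    ultimately show ?thesis unfolding entries using IH by linarith
  qed
qed

lemma continuant_pos:
  assumes "\<forall>n\<in>set ns. n \<ge> 2"
  shows "continuant ns \<ge> 1"
proof (cases "ns = []")
  case True
  then show ?thesis by (simp add: continuant_simps)
next
  case False
  obtain m p q r where "hj_product ns = Mat2 m p q r" by (cases "hj_product ns")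
  with hj_product_bounds[OF False assms this] show ?thesis by (simp add: continuant_def)
qed

lemma tridiag_carrier: "tridiag ns \<in> carrier_mat (length ns) (length ns)"
  by (simp add: tridiag_def)

lemma mat_delete_tridiag_Cons: "mat_delete (tridiag (a # ns)) 0 0 = tridiag ns"
  by (rule eq_matI) (auto simp: mat_delete_def tridiag_def)

lemma mat_delete_tridiag_Cons_Cons:
  "mat_delete (mat_delete (tridiag (a # b # ns)) 1 0) 0 0 = tridiag ns"
  by (rule eq_matI) (auto simp: mat_delete_def tridiag_def)

lemma det_tridiag_minor_10: "det (mat_delete (tridiag (a # b # ns)) 1 0) = det (tridiag ns)"
proof -
  let ?B = "mat_delete (tridiag (a # b # ns)) 1 0"
  have carrier: "?B \<in> carrier_mat (Suc (length ns)) (Suc (length ns))"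
    using mat_delete_carrier[OF tridiag_carrier[of "a # b # ns"]] by simp
  have "det ?B = (\<Sum>j<Suc (length ns). ?B $$ (0,j) * cofactor ?B 0 j)"
    using laplace_expansion_row[OF carrier, of 0] by simp
  also have "\<dots> = (\<Sum>j\<in>{0}. ?B $$ (0,j) * cofactor ?B 0 j)"
    by (rule sum.mono_neutral_right) (auto simp: tridiag_def mat_delete_def)
  also have "\<dots> = det (tridiag ns)"
    using mat_delete_tridiag_Cons_Cons[of a b ns]
    by (simp add: cofactor_def tridiag_def mat_delete_def)
  finally show ?thesis .
qed

lemma det_tridiag: "det (tridiag ns) = (-1) ^ length ns * continuant ns"
proof (induction ns rule: induct_list012)
  case 1
  then show ?case by (simp add: continuant_simps tridiag_def)
next
  case (2 a)
  have "det (tridiag [a]) = tridiag [a] $$ (0,0) * cofactor (tridiag [a]) 0 0"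
    using laplace_expansion_column[OF tridiag_carrier[of "[a]"], of 0] by simp
  also have "\<dots> = -a"
    using mat_delete_tridiag_Cons[of a "[]"] by (simp add: cofactor_def tridiag_def)
  finally show ?case by (simp add: continuant_simps)
next
  case (3 a b ns)
  let ?T = "tridiag (a # b # ns)"
  have "det ?T = (\<Sum>i<length (a # b # ns). ?T $$ (i,0) * cofactor ?T i 0)"
    using laplace_expansion_column[OF tridiag_carrier, of 0] by simp
  also have "\<dots> = (\<Sum>i\<in>{0,1}. ?T $$ (i,0) * cofactor ?T i 0)"
    by (rule sum.mono_neutral_right) (auto simp: tridiag_def)
  also have "\<dots> = -a * det (tridiag (b # ns)) - det (tridiag ns)"
  proof -
    have "?T $$ (0,0) = -a" "?T $$ (1,0) = 1" by (simp_all add: tridiag_def)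
    then show ?thesis
      using det_tridiag_minor_10[of a b ns] by (simp add: cofactor_def mat_delete_tridiag_Cons)
  qed
  finally show ?case using 3 by (simp add: continuant_simps algebra_simps)
qed

lemma qdet_eq_continuant: "\<forall>n\<in>set ns. n \<ge> 2 \<Longrightarrow> qdet ns = continuant ns"
  using continuant_pos[of ns] by (simp add: qdet_def det_tridiag abs_mult power_abs)

lemma continuant_frame:
  assumes "hj_product mid = Mat2 m p q r"
  shows "continuant mid = m"
    and "continuant (mid @ [c]) = m*c + p"
    and "continuant (a # mid) = a*m - q"
    and "continuant (a # mid @ [c]) = (a*m - q)*c + a*p - r"
  using assms by (simp_all add: continuant_def hj_product_append algebra_simps)

lemma hj_defect_frame:
  assumes "hj_product mid = Mat2 m p q r"
  shows "hj_defect (a # mid @ [c]) = m*c + p + (a*m - q) - ((a*m - q)*c + a*p - r)"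
  using continuant_frame[OF assms] by (simp add: hj_defect_def butlast_append)

lemma continuant_Cons_butlast:
  assumes "mid \<noteq> []" "hj_product mid = Mat2 m p q r"
  shows "continuant (a # butlast mid) = r - a*p"
proof -
  obtain ns e where mid: "mid = ns @ [e]" using assms(1) by (cases mid rule: rev_cases) auto
  obtain m' p' q' r' where "hj_product ns = Mat2 m' p' q' r'" by (cases "hj_product ns")
  with assms(2) show ?thesis by (auto simp: mid continuant_def hj_product_append)
qed

lemma continuant_tl_snoc:
  assumes "mid \<noteq> []" "hj_product mid = Mat2 m p q r"
  shows "continuant (tl mid @ [c]) = c*q + r"
proof -
  obtain e ns where mid: "mid = e # ns" using assms(1) by (cases mid) auto
  obtain m' p' q' r' where "hj_product ns = Mat2 m' p' q' r'" by (cases "hj_product ns")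
  with assms(2) show ?thesis by (auto simp: mid continuant_def hj_product_append)
qed

lemma hj_defect_ends_2:
  assumes "mid \<noteq> []" "\<forall>n\<in>set mid. n \<ge> 2"
  shows "hj_defect (2 # mid @ [2]) \<ge> 2"
proof -
  obtain m p q r where prod: "hj_product mid = Mat2 m p q r" by (cases "hj_product mid")
  from hj_product_bounds[OF assms prod] hj_defect_frame[OF prod, of 2 2] show ?thesis
    by (simp add: algebra_simps)
qed

lemma hj_defect_ends_ge_3:
  assumes "mid \<noteq> []" "\<forall>n\<in>set mid. n \<ge> 2" "a \<ge> 3" "c \<ge> 3"
  shows "hj_defect (a # mid @ [c]) \<le> -2"
proof -
  obtain m p q r where prod: "hj_product mid = Mat2 m p q r" by (cases "hj_product mid")
  note bounds = hj_product_bounds[OF assms(1,2) prod]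
  define f where "f = hj_defect (a # mid @ [c])"
  have det: "m*r - p*q = 1" using mat2_det_hj_product[of mid] prod by simp
  \<comment> \<open>multiplying by m and eliminating m r with the determinant relation factors the defect\<close>
  have factored: "f*m = m*m + 1 - ((a-1)*m - q) * ((c-1)*m + p)"
  proof -
    have "f*m - (m*m + 1 - ((a-1)*m - q) * ((c-1)*m + p)) = m*r - p*q - 1"
      unfolding f_def hj_defect_frame[OF prod] by (simp add: algebra_simps)
    with det show ?thesis by linarith
  qed
  have m: "m \<ge> 2" using bounds by linarith
  have "2*m \<le> (a-1)*m" "2*m \<le> (c-1)*m" using assms m by (simp_all add: mult_right_mono)
  then have "m + 1 \<le> (a-1)*m - q" "m + 1 \<le> (c-1)*m + p" using bounds by linarith+
  then have "(m+1)*(m+1) \<le> ((a-1)*m - q) * ((c-1)*m + p)"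
    using m by (intro mult_mono) auto
  then have "f*m \<le> (-2)*m" using factored by (simp add: algebra_simps)
  then show ?thesis using m unfolding f_def by (simp add: mult_right_le_imp_le)
qed

lemma hj_defect_last_2:
  assumes "mid \<noteq> []"
  shows "hj_defect (a # mid @ [2]) = hj_defect ((a-1) # mid)"
proof -
  obtain m p q r where prod: "hj_product mid = Mat2 m p q r" by (cases "hj_product mid")
  show ?thesis
    using assms continuant_Cons_butlast[OF assms prod, of "a-1"] continuant_frame(1)[OF prod]
      continuant_frame(3)[OF prod, of "a-1"]
      hj_defect_frame[OF prod, of a 2]
    by (simp add: hj_defect_def algebra_simps)
qed

lemma hj_defect_hd_2:
  assumes "mid \<noteq> []"
  shows "hj_defect (2 # mid @ [c]) = hj_defect (mid @ [c-1])"
proof -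
  obtain m p q r where prod: "hj_product mid = Mat2 m p q r" by (cases "hj_product mid")
  show ?thesis
    using assms continuant_tl_snoc[OF assms prod, of "c-1"] continuant_frame(1)[OF prod]
      continuant_frame(2)[OF prod, of "c-1"]
      hj_defect_frame[OF prod, of 2 c]
    by (simp add: hj_defect_def algebra_simps)
qed

lemma V_iff_hj_defect:
  "ns \<in> V l \<longleftrightarrow> length ns = l \<and> (\<forall>n\<in>set ns. n \<ge> 2) \<and> -1 \<le> hj_defect ns \<and> hj_defect ns \<le> 1"
proof -
  have "qdet (tl ns) + qdet (butlast ns) - qdet ns = hj_defect ns" if "\<forall>n\<in>set ns. n \<ge> 2"
  proof -
    have "\<forall>n\<in>set (tl ns). n \<ge> 2" "\<forall>n\<in>set (butlast ns). n \<ge> 2"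
      using that by (cases ns; auto dest: in_set_butlastD)+
    with that show ?thesis by (simp add: qdet_eq_continuant hj_defect_def)
  qed
  then show ?thesis unfolding V_def by auto
qed

lemma V_ends:
  assumes "ns \<in> V l" "l \<ge> 3"
  obtains a mid c where "ns = a # mid @ [c]" "mid \<noteq> []" "\<forall>n\<in>set mid. n \<ge> 2"
    "(a = 2 \<and> c \<ge> 3) \<or> (a \<ge> 3 \<and> c = 2)"
proof -
  have ns: "length ns = l" "\<forall>n\<in>set ns. n \<ge> 2" "-1 \<le> hj_defect ns" "hj_defect ns \<le> 1"
    using assms(1) V_iff_hj_defect by auto
  obtain a mid c where split: "ns = a # mid @ [c]" "mid \<noteq> []"
    using ns(1) assms(2)
    by (cases ns; cases "tl ns" rule: rev_cases) (auto simp: Suc_le_eq)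
  have entries: "\<forall>n\<in>set mid. n \<ge> 2" "a \<ge> 2" "c \<ge> 2" using ns(2) split by auto
  have "\<not> (a = 2 \<and> c = 2)" using hj_defect_ends_2[OF split(2) entries(1)] ns split by auto
  moreover have "\<not> (a \<ge> 3 \<and> c \<ge> 3)"
    using hj_defect_ends_ge_3[OF split(2) entries(1), of a c] ns split by auto
  ultimately show ?thesis using that[OF split entries(1)] entries by fastforce
qed

lemma V_sum_list_ge:
  assumes "ns \<in> V l" "l \<ge> 3"
  shows "sum_list ns \<ge> 3 * int l - 3"
  using assms
proof (induction l arbitrary: ns rule: less_induct)
  case (less l)
  have ns: "length ns = l" "\<forall>n\<in>set ns. n \<ge> 2" "-1 \<le> hj_defect ns" "hj_defect ns \<le> 1"
    using less.prems(1) V_iff_hj_defect by auto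
  show ?case
  proof (cases "l = 3")
    case True
    have "sum_list (map (\<lambda>_. 2::int) ns) \<le> sum_list ns"
      using ns(2) by (induction ns) auto
    then show ?thesis using True ns(1) by (simp add: sum_list_triv)
  next
    case False
    obtain a mid c where split: "ns = a # mid @ [c]" "mid \<noteq> []" "\<forall>n\<in>set mid. n \<ge> 2"
      and ends: "(a = 2 \<and> c \<ge> 3) \<or> (a \<ge> 3 \<and> c = 2)"
      using V_ends[OF less.prems] by blast
    obtain ns' where ns': "length ns' = l - 1" "\<forall>n\<in>set ns'. n \<ge> 2"
      "hj_defect ns' = hj_defect ns" "sum_list ns = sum_list ns' + 3"
    proof (cases "a = 2")
      case True
      with ends split ns(1) show ?thesis
        by (intro that[of "mid @ [c-1]"]) (auto simp: hj_defect_hd_2)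
    next
      case False
      with ends split ns(1) show ?thesis
        by (intro that[of "(a-1) # mid"]) (auto simp: hj_defect_last_2)
    qed
    have "ns' \<in> V (l - 1)" using ns ns' V_iff_hj_defect by auto
    then have "sum_list ns' \<ge> 3 * int (l - 1) - 3"
      using less.IH[of "l - 1"] less.prems(2) False by simp
    then show ?thesis using ns'(4) less.prems(2) by (simp add: of_nat_diff)
  qed
qed

theorem lemma2p7:
  fixes l :: nat
  assumes "l \<ge> 3"
  shows "(\<forall>ns \<in> V l. \<not> (hd ns = 2 \<and> last ns = 2))
       \<and> (\<forall>ns. length ns = l \<and> (\<forall>n \<in> set ns. n \<ge> 2) \<and> hd ns \<ge> 3 \<and> last ns \<ge> 3 \<longrightarrow> ns \<notin> V l)
       \<and> (\<forall>ns \<in> V l. sum_list ns \<noteq> 3 * int l - 4)"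
proof -
  have one_end_2: "(hd ns = 2 \<and> last ns \<ge> 3) \<or> (hd ns \<ge> 3 \<and> last ns = 2)"
    if ns: "ns \<in> V l" for ns
  proof -
    obtain a mid c where "ns = a # mid @ [c]" "(a = 2 \<and> c \<ge> 3) \<or> (a \<ge> 3 \<and> c = 2)"
      using V_ends[OF ns assms] by blast
    then show ?thesis by simp
  qed
  have "\<not> (hd ns = 2 \<and> last ns = 2)" if "ns \<in> V l" for ns
    using one_end_2[OF that] by linarith
  moreover have "ns \<notin> V l" if "hd ns \<ge> 3" "last ns \<ge> 3" for ns
    using one_end_2[of ns] that by linarith
  moreover have "sum_list ns \<noteq> 3 * int l - 4" if "ns \<in> V l" for ns
    using V_sum_list_ge[OF that assms] by linarith
  ultimately show ?thesis by blast
qed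

end
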